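(* Let $X$ be a $k$-variety. Then $X$ admits a nontrivial rational $\mathbb{G}_a$-action if and only if $X$ is birationally ruled, i.e. birationally isomorphic over $k$ to $Y\times\mathbb{P}^1$ for some $k$-variety $Y$.
   Context: Throughout, $k$ is a field of characteristic zero and a $k$-variety is a separated geometrically integral scheme of finite type over $k$; $K_X$ denotes the field of rational functions of $X$, and $\mathbb{G}_a=\mathrm{Spec}(k[t])$. A rational $\mathbb{G}_a$-action on $X$ is a rational map $\alpha:\mathbb{G}_a\times X\dashrightarrow X$ such that $\alpha\circ(\mathrm{id}\times\alpha)=\alpha\circ(\mathrm{m}\times\mathrm{id}_X)$ as rational maps $\mathbb{G}_a\times\mathbb{G}_a\times X\dashrightarrow X$ ($\mathrm{m}$ the group law) and $\alpha(0,x)=x$ wherever defined. Equivalently, it is given by a homomorphism of $k$-fields $\alpha^*:K_X\to K_X(t)$ with image in the valuation ring $\mathcal{O}_{\nu_0}=\{r(t)\in K_X(t):\mathrm{ord}_{t=0}r\ge 0\}$, such that $(\alpha^*\otimes\mathrm{id})\circ\alpha^* $ equals $\alpha^*$ followed by $t\mapsto t+t'$ (as maps $K_X\to K_X(t,t')$) and such that $\alpha^*$ composed with reduction $\mathcal{O}_{\nu_0}\to\mathcal{O}_{\nu_0}/t\mathcal{O}_{\nu_0}\cong K_X$ is the identity. The action is trivial if $\alpha^*(f)=f$ for all $f\in K_X$. *)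

theory Defs
  imports "HOL-Computational_Algebra.Polynomial" "HOL-Computational_Algebra.Fraction_Field"
begin

text \<open>The function field K_X is modelled as the type 'a (a field of characteristic zero),
  and the base field k as a subfield of it.\<close>

definition subfield :: "'a::field set \<Rightarrow> bool" where
  "subfield F \<longleftrightarrow> 0 \<in> F \<and> 1 \<in> F \<and> (\<forall>x\<in>F. \<forall>y\<in>F. x + y \<in> F \<and> x * y \<in> F)
     \<and> (\<forall>x\<in>F. - x \<in> F \<and> inverse x \<in> F)"

definition gen_field :: "'a::field set \<Rightarrow> 'a set" where
  "gen_field S = \<Inter>{F. subfield F \<and> S \<subseteq> F}"

definition algebraic_over :: "'a::field set \<Rightarrow> 'a \<Rightarrow> bool" where
  "algebraic_over F x \<longleftrightarrow> (\<exists>p. p \<noteq> 0 \<and> (\<forall>i. coeff p i \<in> F) \<and> poly p x = 0)"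

definition fin_gen_over :: "'a::field set \<Rightarrow> 'a set \<Rightarrow> bool" where
  "fin_gen_over k L \<longleftrightarrow> (\<exists>S. finite S \<and> S \<subseteq> L \<and> gen_field (k \<union> S) = L)"

definition alg_closed_in :: "'a::field set \<Rightarrow> 'a set \<Rightarrow> bool" where
  "alg_closed_in k L \<longleftrightarrow> (\<forall>y\<in>L. algebraic_over k y \<longrightarrow> y \<in> k)"

text \<open>L is (k-isomorphic to) the function field of a k-variety: finitely generated over k,
  with k algebraically closed in L (equivalent to geometric integrality in char 0).\<close>
definition function_field_of_variety :: "'a::field set \<Rightarrow> 'a set \<Rightarrow> bool" where
  "function_field_of_variety k L \<longleftrightarrow>
     subfield k \<and> subfield L \<and> k \<subseteq> L \<and> fin_gen_over k L \<and> alg_closed_in k L"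

text \<open>Birationally ruled: K_X is k-isomorphic to K_Y(t) for a k-variety Y, i.e.
  K_X = L(x) with L the function field of a k-variety and x transcendental over L.\<close>
definition birationally_ruled :: "'a::field set \<Rightarrow> bool" where
  "birationally_ruled k \<longleftrightarrow>
     (\<exists>L x. function_field_of_variety k L \<and> \<not> algebraic_over L x \<and> gen_field (L \<union> {x}) = UNIV)"

text \<open>K(t) is 'a poly fract; K(t,t') is modelled as K(t')(t) = 'a poly fract poly fract.\<close>
definition const_rf :: "'a::field \<Rightarrow> 'a poly fract" where
  "const_rf c = Fract [:c:] 1"

definition var_rf :: "'a::field poly fract" where
  "var_rf = Fract [:0, 1:] 1"

text \<open>p(t) \<mapsto> p(t + t'), as a polynomial in t over K(t').\<close>
definition shift_poly :: "'a::field poly \<Rightarrow> 'a poly fract poly" where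
  "shift_poly p = pcompose (map_poly const_rf p) [:var_rf, 1:]"

definition rational_Ga_action :: "'a::field set \<Rightarrow> ('a \<Rightarrow> 'a poly fract) \<Rightarrow> bool" where
  "rational_Ga_action k \<alpha> \<longleftrightarrow>
     (\<forall>x y. \<alpha> (x + y) = \<alpha> x + \<alpha> y) \<and> (\<forall>x y. \<alpha> (x * y) = \<alpha> x * \<alpha> y) \<and> \<alpha> 1 = 1 \<and>
     (\<forall>c\<in>k. \<alpha> c = const_rf c) \<and>
     (\<forall>f. \<exists>p q. poly q 0 \<noteq> 0 \<and> \<alpha> f = Fract p q \<and> poly p 0 / poly q 0 = f) \<and>
     (\<forall>f p q. q \<noteq> 0 \<longrightarrow> \<alpha> f = Fract p q \<longrightarrow>
        Fract (map_poly \<alpha> p) (map_poly \<alpha> q) = Fract (shift_poly p) (shift_poly q))"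

definition trivial_action :: "('a::field \<Rightarrow> 'a poly fract) \<Rightarrow> bool" where
  "trivial_action \<alpha> \<longleftrightarrow> (\<forall>f. \<alpha> f = const_rf f)"

end

(*
  If K = L(x) with x transcendental over L, then f(x) \<mapsto> f(x + t), fixing L, is a nontrivial
  rational G_a-action.  Conversely, write \<alpha>(f) = a/b in lowest terms with b monic.  Since
  reduced fractions are unique, the cocycle identity forces \<alpha> applied to the coefficients of
  a and b to give a(X + t) and b(X + t).  For a nontrivial action one of them is nonconstant,
  and comparing its two top coefficients yields a slice s with \<alpha>(s) = s + t.  Then s is
  transcendental over the invariant field L, and K = L(s).  Finally L is finitely generated
  over k: the finitely many coefficients needed to write generators of K as rational functions
  of s generate a subfield L0 of L with L0(s) = K, and transcendence of s forces L0 = L.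
*)

theory Submission
  imports Defs
begin

locale ring_hom =
  fixes h :: "'a::comm_ring_1 \<Rightarrow> 'b::comm_ring_1"
  assumes hom_1 [simp]: "h 1 = 1"
    and hom_add [simp]: "h (x + y) = h x + h y"
    and hom_mult [simp]: "h (x * y) = h x * h y"
begin

lemma hom_0 [simp]: "h 0 = 0"
  using hom_add[of 0 0] by simp

lemma hom_uminus [simp]: "h (- x) = - h x"
  using hom_add[of x "- x"] by (simp add: eq_neg_iff_add_eq_0 add.commute)

lemma hom_sum: "h (sum g A) = (\<Sum>a\<in>A. h (g a))"
  by (induction A rule: infinite_finite_induct) simp_all

lemma hom_of_nat [simp]: "h (of_nat n) = of_nat n"
  by (induction n) simp_all

lemma hom_poly: "h (poly p x) = poly (map_poly h p) (h x)"
  by (induction p) (simp_all add: map_poly_pCons)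

lemma ring_hom_map_poly: "ring_hom (map_poly h)"
  by unfold_locales (auto intro!: poly_eqI simp: coeff_map_poly coeff_mult hom_sum)

lemma map_poly_pcompose: "map_poly h (pcompose p q) = pcompose (map_poly h p) (map_poly h q)"
proof -
  interpret H: ring_hom "map_poly h" by (rule ring_hom_map_poly)
  show ?thesis by (induction p) (simp_all add: pcompose_pCons map_poly_pCons)
qed

end

locale field_hom = ring_hom h for h :: "'a::field \<Rightarrow> 'b::field"
begin

lemma hom_eq_0_iff [simp]: "h x = 0 \<longleftrightarrow> x = 0"
proof
  assume "h x = 0"
  show "x = 0"
  proof (rule ccontr)
    assume "x \<noteq> 0"
    then have "h x * h (inverse x) = 1" by (simp flip: hom_mult)
    with \<open>h x = 0\<close> show False by simp
  qed
qed simp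

lemma hom_inverse [simp]: "h (inverse x) = inverse (h x)"
proof (cases "x = 0")
  case False
  then have "h x * h (inverse x) = 1" by (simp flip: hom_mult)
  then show ?thesis by (simp add: inverse_unique)
qed simp

lemma hom_divide [simp]: "h (x / y) = h x / h y"
  by (simp add: divide_inverse)

lemma degree_map_poly_hom [simp]: "degree (map_poly h p) = degree p"
  by (rule degree_map_poly) simp

lemma map_poly_hom_eq_0_iff [simp]: "map_poly h p = 0 \<longleftrightarrow> p = 0"
  by (rule map_poly_eq_0_iff) simp_all

end

section \<open>Subfields and simple extensions\<close>

lemma subfield_0: "subfield F \<Longrightarrow> 0 \<in> F"
  and subfield_1: "subfield F \<Longrightarrow> 1 \<in> F"
  and subfield_add: "subfield F \<Longrightarrow> x \<in> F \<Longrightarrow> y \<in> F \<Longrightarrow> x + y \<in> F"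
  and subfield_mult: "subfield F \<Longrightarrow> x \<in> F \<Longrightarrow> y \<in> F \<Longrightarrow> x * y \<in> F"
  and subfield_uminus: "subfield F \<Longrightarrow> x \<in> F \<Longrightarrow> - x \<in> F"
  and subfield_inverse: "subfield F \<Longrightarrow> x \<in> F \<Longrightarrow> inverse x \<in> F"
  by (simp_all add: subfield_def)

lemma subfield_diff: "subfield F \<Longrightarrow> x \<in> F \<Longrightarrow> y \<in> F \<Longrightarrow> x - y \<in> F"
  using subfield_add[of F x "- y"] by (simp add: subfield_uminus)

lemma subfield_divide: "subfield F \<Longrightarrow> x \<in> F \<Longrightarrow> y \<in> F \<Longrightarrow> x / y \<in> F"
  by (simp add: divide_inverse subfield_mult subfield_inverse)

lemma (in field_hom) subfield_equalizer:
  assumes "field_hom g"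
  shows "subfield {x. h x = g x}"
proof -
  interpret g: field_hom g by (fact assms)
  show ?thesis by (simp add: subfield_def)
qed

lemma subfield_gen_field: "subfield (gen_field A)"
  unfolding gen_field_def subfield_def by blast

lemma gen_field_superset: "A \<subseteq> gen_field A"
  unfolding gen_field_def by blast

lemma gen_field_least: "subfield F \<Longrightarrow> A \<subseteq> F \<Longrightarrow> gen_field A \<subseteq> F"
  unfolding gen_field_def by blast

definition poly_over :: "'a::field set \<Rightarrow> 'a poly \<Rightarrow> bool" where
  "poly_over F p \<longleftrightarrow> (\<forall>i. coeff p i \<in> F)"

lemma poly_over_iff_coeffs:
  assumes "0 \<in> F"
  shows "poly_over F p \<longleftrightarrow> set (coeffs p) \<subseteq> F"
proof
  assume "poly_over F p"
  moreover have "coeffs p ! i = coeff p i" if "i < length (coeffs p)" for i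
    using that by (cases "p = 0") (simp_all add: length_coeffs coeffs_nth)
  ultimately show "set (coeffs p) \<subseteq> F"
    unfolding poly_over_def by (auto simp: in_set_conv_nth)
next
  assume coeffs: "set (coeffs p) \<subseteq> F"
  have "coeff p i \<in> F" for i
    using coeffs coeff_in_coeffs[of p i] assms
    by (cases "p \<noteq> 0 \<and> i \<le> degree p") (auto simp: coeff_eq_0)
  then show "poly_over F p" unfolding poly_over_def by blast
qed

lemma poly_over_mono: "F \<subseteq> G \<Longrightarrow> poly_over F p \<Longrightarrow> poly_over G p"
  unfolding poly_over_def by blast

context
  fixes F :: "'a::field set"
  assumes F: "subfield F"
begin

lemma poly_over_pCons: "c \<in> F \<Longrightarrow> poly_over F p \<Longrightarrow> poly_over F (pCons c p)"
  by (simp add: poly_over_def coeff_pCons split: nat.splits)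

lemma poly_over_const: "c \<in> F \<Longrightarrow> poly_over F [:c:]"
  by (simp add: poly_over_def coeff_pCons subfield_0[OF F] split: nat.splits)

lemma poly_over_1: "poly_over F 1"
  by (metis one_pCons poly_over_const subfield_1[OF F])

lemma poly_over_X: "poly_over F [:0, 1:]"
  by (simp add: poly_over_pCons poly_over_1 subfield_0[OF F] flip: one_pCons)

lemma poly_over_add: "poly_over F p \<Longrightarrow> poly_over F q \<Longrightarrow> poly_over F (p + q)"
  by (simp add: poly_over_def subfield_add[OF F])

lemma poly_over_uminus: "poly_over F p \<Longrightarrow> poly_over F (- p)"
  by (simp add: poly_over_def subfield_uminus[OF F])

lemma poly_over_diff: "poly_over F p \<Longrightarrow> poly_over F q \<Longrightarrow> poly_over F (p - q)"
  by (simp add: poly_over_def subfield_diff[OF F])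

lemma poly_over_mult: "poly_over F p \<Longrightarrow> poly_over F q \<Longrightarrow> poly_over F (p * q)"
  unfolding poly_over_def
  by (blast intro: coeff_mult_semiring_closed subfield_0[OF F] subfield_add[OF F]
      subfield_mult[OF F])

lemma poly_over_smult: "c \<in> F \<Longrightarrow> poly_over F p \<Longrightarrow> poly_over F (smult c p)"
  by (simp add: poly_over_def subfield_mult[OF F])

lemma poly_in_subfield: "poly_over F p \<Longrightarrow> x \<in> F \<Longrightarrow> poly p x \<in> F"
proof (induction p)
  case (pCons a p)
  have "a \<in> F" "poly_over F p"
    using pCons.prems(1) unfolding poly_over_def by (metis coeff_pCons_0, metis coeff_pCons_Suc)
  then show ?case
    using pCons by (simp add: subfield_add[OF F] subfield_mult[OF F])
qed (simp add: subfield_0[OF F])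

end

definition subring :: "'a::comm_ring_1 set \<Rightarrow> bool" where
  "subring R \<longleftrightarrow> 1 \<in> R \<and> (\<forall>x\<in>R. \<forall>y\<in>R. x + y \<in> R \<and> x * y \<in> R \<and> - x \<in> R)"

definition quotients :: "'a::field set \<Rightarrow> 'a set" where
  "quotients R = {a / b | a b. a \<in> R \<and> b \<in> R \<and> b \<noteq> 0}"

lemma quotientsI: "a \<in> R \<Longrightarrow> b \<in> R \<Longrightarrow> b \<noteq> 0 \<Longrightarrow> a / b \<in> quotients R"
  unfolding quotients_def by blast

lemma quotientsE:
  assumes "u \<in> quotients R"
  obtains a b where "a \<in> R" "b \<in> R" "b \<noteq> 0" "u = a / b"
  using assms unfolding quotients_def by blast

lemma subset_quotients: "1 \<in> R \<Longrightarrow> R \<subseteq> quotients R"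
proof
  fix u assume "1 \<in> R" "u \<in> R"
  then have "u / 1 \<in> quotients R"
    using quotientsI[of u R 1] by simp
  then show "u \<in> quotients R" by simp
qed

lemma subfield_quotients:
  assumes R: "subring R"
  shows "subfield (quotients R)"
proof -
  have closed: "x + y \<in> R" "x * y \<in> R" if "x \<in> R" "y \<in> R" for x y
    using R that unfolding subring_def by blast+
  have closed_uminus: "- x \<in> R" if "x \<in> R" for x
    using R that unfolding subring_def by blast
  have "1 \<in> R" using R unfolding subring_def by blast
  then have "0 \<in> R" using closed(1)[of 1 "- 1"] closed_uminus[of 1] by simp
  have "0 / 1 \<in> quotients R" "1 / 1 \<in> quotients R"
    using \<open>0 \<in> R\<close> \<open>1 \<in> R\<close> by (simp_all only: quotientsI one_neq_zero not_False_eq_True)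
  then have "0 \<in> quotients R" "1 \<in> quotients R" by simp_all
  moreover have "u + v \<in> quotients R \<and> u * v \<in> quotients R"
    if u: "u \<in> quotients R" and v: "v \<in> quotients R" for u v
  proof -
    obtain a b where ab: "a \<in> R" "b \<in> R" "b \<noteq> 0" "u = a / b"
      using u by (rule quotientsE)
    obtain c d where cd: "c \<in> R" "d \<in> R" "d \<noteq> 0" "v = c / d"
      using v by (rule quotientsE)
    have "(a * d + c * b) / (b * d) \<in> quotients R" "(a * c) / (b * d) \<in> quotients R"
      using ab cd by (simp_all add: quotientsI closed)
    moreover have "u + v = (a * d + c * b) / (b * d)" "u * v = (a * c) / (b * d)"
      using ab cd by (simp_all add: add_frac_eq)
    ultimately show ?thesis by simp
  qed
  moreover have "- u \<in> quotients R \<and> inverse u \<in> quotients R" if u: "u \<in> quotients R" for u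
  proof -
    obtain a b where ab: "a \<in> R" "b \<in> R" "b \<noteq> 0" "u = a / b"
      using u by (rule quotientsE)
    have "(- a) / b \<in> quotients R"
      using ab by (intro quotientsI closed_uminus)
    then have "- u \<in> quotients R"
      using ab by simp
    moreover have "inverse u \<in> quotients R"
    proof (cases "a = 0")
      case True
      then show ?thesis using ab \<open>0 \<in> quotients R\<close> by simp
    next
      case False
      then have "b / a \<in> quotients R" using ab by (simp add: quotientsI)
      then show ?thesis using ab by simp
    qed
    ultimately show ?thesis by blast
  qed
  ultimately show ?thesis unfolding subfield_def by blast
qed

definition poly_values :: "'a::field set \<Rightarrow> 'a \<Rightarrow> 'a set" where
  "poly_values F x = {poly A x | A. poly_over F A}"

lemma poly_valuesI: "poly_over F A \<Longrightarrow> poly A x \<in> poly_values F x"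
  unfolding poly_values_def by blast

lemma poly_valuesE:
  assumes "u \<in> poly_values F x"
  obtains A where "poly_over F A" "u = poly A x"
  using assms unfolding poly_values_def by blast

lemma subring_poly_values:
  assumes F: "subfield F"
  shows "subring (poly_values F x)"
  unfolding subring_def
proof (intro conjI ballI)
  show "1 \<in> poly_values F x"
    using poly_valuesI[OF poly_over_1[OF F]] by simp
  fix u v assume "u \<in> poly_values F x" "v \<in> poly_values F x"
  then obtain A B where AB: "poly_over F A" "poly_over F B" "u = poly A x" "v = poly B x"
    by (metis poly_valuesE)
  have "poly (A + B) x \<in> poly_values F x" "poly (A * B) x \<in> poly_values F x"
      "poly (- A) x \<in> poly_values F x"
    using AB(1,2)
    by (blast intro: poly_valuesI poly_over_add[OF F] poly_over_mult[OF F] poly_over_uminus[OF F])+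
  then show "u + v \<in> poly_values F x" "u * v \<in> poly_values F x" "- u \<in> poly_values F x"
    using AB(3,4) by simp_all
qed

lemma gen_field_adjoinE:
  assumes F: "subfield F" and y: "y \<in> gen_field (F \<union> {x})"
  obtains A B where "poly_over F A" "poly_over F B" "poly B x \<noteq> 0" "y = poly A x / poly B x"
proof -
  have "poly [:c:] x \<in> poly_values F x" if "c \<in> F" for c
    using poly_valuesI[OF poly_over_const[OF F that]] .
  moreover have "poly [:0, 1:] x \<in> poly_values F x"
    using poly_valuesI[OF poly_over_X[OF F]] .
  ultimately have "F \<union> {x} \<subseteq> poly_values F x" by auto
  moreover have "poly_values F x \<subseteq> quotients (poly_values F x)"
    by (rule subset_quotients) (use poly_valuesI[OF poly_over_1[OF F], of x] in simp)
  ultimately have "gen_field (F \<union> {x}) \<subseteq> quotients (poly_values F x)"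
    using gen_field_least subfield_quotients[OF subring_poly_values[OF F]] by blast
  with y obtain a b where ab: "a \<in> poly_values F x" "b \<in> poly_values F x" "b \<noteq> 0" "y = a / b"
    by (blast elim: quotientsE)
  obtain A where A: "poly_over F A" "a = poly A x" using ab(1) by (rule poly_valuesE)
  obtain B where B: "poly_over F B" "b = poly B x" using ab(2) by (rule poly_valuesE)
  show ?thesis using that[OF A(1) B(1)] ab(3,4) A(2) B(2) by simp
qed

lemma gen_field_adjoinI:
  assumes F: "subfield F" and "poly_over F A" "poly_over F B"
  shows "poly A x / poly B x \<in> gen_field (F \<union> {x})"
proof -
  let ?G = "gen_field (F \<union> {x})"
  have "F \<subseteq> ?G" "x \<in> ?G"
    using gen_field_superset[of "F \<union> {x}"] by auto
  then have "poly A x \<in> ?G" "poly B x \<in> ?G"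
    using poly_in_subfield[OF subfield_gen_field] poly_over_mono assms(2,3) by blast+
  then show ?thesis
    by (rule subfield_divide[OF subfield_gen_field])
qed

lemma transcendental_poly_eq_0:
  "\<not> algebraic_over F x \<Longrightarrow> poly_over F p \<Longrightarrow> poly p x = 0 \<Longrightarrow> p = 0"
  unfolding algebraic_over_def poly_over_def by blast

lemma subfield_eq_if_adjoin_transcendental:
  assumes L0: "subfield L0" and L: "subfield L" and "L0 \<subseteq> L"
    and transcendental: "\<not> algebraic_over L s" and generates: "gen_field (L0 \<union> {s}) = UNIV"
  shows "L0 = L"
proof
  show "L \<subseteq> L0"
  proof
    fix l assume "l \<in> L"
    obtain A B where AB: "poly_over L0 A" "poly_over L0 B" "poly B s \<noteq> 0" "l = poly A s / poly B s"
      using gen_field_adjoinE[OF L0, of l s] generates by blast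
    have "poly_over L (smult l B - A)"
      using poly_over_mono[OF \<open>L0 \<subseteq> L\<close>] AB(1,2) \<open>l \<in> L\<close>
      by (simp add: poly_over_diff poly_over_smult L)
    moreover have "poly (smult l B - A) s = 0" using AB(3,4) by simp
    ultimately have "smult l B = A" using transcendental_poly_eq_0[OF transcendental] by fastforce
    then have "l * lead_coeff B = coeff A (degree B)" by auto
    moreover have "lead_coeff B \<noteq> 0" using AB(3) by auto
    ultimately have "l = coeff A (degree B) / lead_coeff B" by (simp add: field_simps)
    then show "l \<in> L0" using AB(1,2) subfield_divide[OF L0] unfolding poly_over_def by simp
  qed
qed fact

lemma finite_subset_gen_field_adjoin:
  assumes L: "subfield L" and "finite S" and S: "S \<subseteq> gen_field (L \<union> {s})"
  obtains C where "finite C" "C \<subseteq> L" "\<And>L0. subfield L0 \<Longrightarrow> C \<subseteq> L0 \<Longrightarrow> S \<subseteq> gen_field (L0 \<union> {s})"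
proof -
  have "\<exists>A B. poly_over L A \<and> poly_over L B \<and> g = poly A s / poly B s" if "g \<in> S" for g
  proof -
    from S \<open>g \<in> S\<close> have "g \<in> gen_field (L \<union> {s})" by blast
    then obtain A B where "poly_over L A" "poly_over L B" "g = poly A s / poly B s"
      by (rule gen_field_adjoinE[OF L])
    then show ?thesis by blast
  qed
  then obtain A B where AB: "\<And>g. g \<in> S \<Longrightarrow>
      poly_over L (A g) \<and> poly_over L (B g) \<and> g = poly (A g) s / poly (B g) s"
    by metis
  define C where "C = (\<Union>g\<in>S. set (coeffs (A g)) \<union> set (coeffs (B g)))"
  have "finite C" using \<open>finite S\<close> unfolding C_def by blast
  moreover have "C \<subseteq> L" using AB poly_over_iff_coeffs[OF subfield_0[OF L]] unfolding C_def by blast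
  moreover have "S \<subseteq> gen_field (L0 \<union> {s})" if L0: "subfield L0" "C \<subseteq> L0" for L0
  proof
    fix g assume "g \<in> S"
    then have "set (coeffs (A g)) \<subseteq> L0" "set (coeffs (B g)) \<subseteq> L0"
      using L0(2) unfolding C_def by blast+
    then have "poly_over L0 (A g)" "poly_over L0 (B g)"
      using poly_over_iff_coeffs[OF subfield_0[OF L0(1)]] by blast+
    then have "poly (A g) s / poly (B g) s \<in> gen_field (L0 \<union> {s})"
      by (rule gen_field_adjoinI[OF L0(1)])
    with AB[OF \<open>g \<in> S\<close>] show "g \<in> gen_field (L0 \<union> {s})" by simp
  qed
  ultimately show ?thesis by (rule that)
qed

lemma fin_gen_over_if_adjoin_transcendental:
  assumes "k \<subseteq> L" and L: "subfield L" and "fin_gen_over k UNIV"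
    and transcendental: "\<not> algebraic_over L s" and generates: "gen_field (L \<union> {s}) = UNIV"
  shows "fin_gen_over k L"
proof -
  obtain S where "finite S" and S: "gen_field (k \<union> S) = UNIV"
    using \<open>fin_gen_over k UNIV\<close> unfolding fin_gen_over_def by blast
  have "S \<subseteq> gen_field (L \<union> {s})" using generates by simp
  then obtain C where "finite C" "C \<subseteq> L"
    and C: "\<And>L0. subfield L0 \<Longrightarrow> C \<subseteq> L0 \<Longrightarrow> S \<subseteq> gen_field (L0 \<union> {s})"
    using finite_subset_gen_field_adjoin[OF L \<open>finite S\<close>] by blast
  define L0 where "L0 = gen_field (k \<union> C)"
  have "subfield L0" "k \<subseteq> L0" "C \<subseteq> L0"
    unfolding L0_def using subfield_gen_field gen_field_superset by blast+
  moreover have "L0 \<subseteq> L"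
    unfolding L0_def using gen_field_least[OF L] \<open>k \<subseteq> L\<close> \<open>C \<subseteq> L\<close> by blast
  moreover have "L0 \<subseteq> gen_field (L0 \<union> {s})"
    using gen_field_superset by blast
  ultimately have "k \<union> S \<subseteq> gen_field (L0 \<union> {s})"
    using C[OF \<open>subfield L0\<close> \<open>C \<subseteq> L0\<close>] by blast
  then have "gen_field (L0 \<union> {s}) = UNIV"
    using gen_field_least[OF subfield_gen_field, of "k \<union> S"] S by blast
  then have "gen_field (k \<union> C) = L"
    using subfield_eq_if_adjoin_transcendental[OF \<open>subfield L0\<close> L \<open>L0 \<subseteq> L\<close> transcendental]
    unfolding L0_def by blast
  then show ?thesis
    unfolding fin_gen_over_def using \<open>finite C\<close> \<open>C \<subseteq> L\<close> by blast
qed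

section \<open>Reduced fractions of polynomials\<close>

definition comaximal :: "'a::comm_ring_1 \<Rightarrow> 'a \<Rightarrow> bool" where
  "comaximal a b \<longleftrightarrow> (\<exists>u v. u * a + v * b = 1)"

lemma (in ring_hom) comaximal_hom: "comaximal a b \<Longrightarrow> comaximal (h a) (h b)"
  unfolding comaximal_def by (metis hom_1 hom_add hom_mult)

lemma comaximal_dvd:
  assumes "comaximal a b" "a * d = c * b"
  shows "b dvd d"
proof -
  obtain u v where uv: "u * a + v * b = 1"
    using assms(1) unfolding comaximal_def by blast
  have "d = (u * a + v * b) * d" by (simp add: uv)
  also have "\<dots> = u * (a * d) + b * (v * d)" by (simp add: algebra_simps)
  also have "\<dots> = b * (u * c + v * d)" by (simp add: assms(2) algebra_simps)
  finally show ?thesis by (rule dvdI)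
qed

lemma monic_dvd_antisym:
  fixes b d :: "'a::field poly"
  assumes "b dvd d" "d dvd b" "lead_coeff b = 1" "lead_coeff d = 1"
  shows "b = d"
proof -
  obtain w where w: "d = b * w" using assms(1) by blast
  have "b \<noteq> 0" "d \<noteq> 0" using assms(3,4) by auto
  then have "degree d = degree b + degree w" using w by (auto simp: degree_mult_eq)
  moreover have "degree d \<le> degree b" using assms(2) \<open>b \<noteq> 0\<close> by (rule dvd_imp_degree_le)
  ultimately obtain c where c: "w = [:c:]" by (metis add_le_same_cancel1 le_zero_eq degree_eq_zeroE)
  then have "c = 1" using assms(3,4) w by (cases "c = 0") simp_all
  then show ?thesis using w c by simp
qed

lemma comaximal_monic_unique:
  fixes a b c d :: "'a::field poly"
  assumes "comaximal a b" "comaximal c d" "lead_coeff b = 1" "lead_coeff d = 1" "a * d = c * b"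
  shows "a = c" "b = d"
proof -
  have "b dvd d" "d dvd b"
    using comaximal_dvd[OF assms(1,5)] comaximal_dvd[OF assms(2) assms(5)[symmetric]] .
  then show "b = d" using monic_dvd_antisym assms(3,4) by blast
  moreover have "d \<noteq> 0" using assms(4) by auto
  ultimately show "a = c" using assms(5) by simp
qed

lemma poly_ideal_generator:
  fixes p q :: "'a::field poly"
  assumes q: "q \<noteq> 0"
  obtains g u v where "g = u * p + v * q" "g \<noteq> 0" "g dvd p" "g dvd q"
proof -
  define S where "S = {u * p + v * q | u v. True}"
  have "1 * p + 0 * q \<in> S" "0 * p + 1 * q \<in> S" unfolding S_def by blast+
  then have "p \<in> S" "q \<in> S" by simp_all
  define n where "n = (LEAST n. \<exists>g\<in>S. g \<noteq> 0 \<and> degree g = n)"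
  obtain g where g: "g \<in> S" "g \<noteq> 0" "degree g = n"
    using LeastI[of "\<lambda>n. \<exists>g\<in>S. g \<noteq> 0 \<and> degree g = n" "degree q"] \<open>q \<in> S\<close> q
    unfolding n_def by blast
  have minimal: "degree g \<le> degree f" if "f \<in> S" "f \<noteq> 0" for f
    using that unfolding g(3) n_def by (blast intro: Least_le)
  obtain u v where uv: "g = u * p + v * q" using g(1) unfolding S_def by blast
  have "g dvd f" if "f \<in> S" for f
  proof -
    from \<open>f \<in> S\<close> obtain u' v' where f: "f = u' * p + v' * q" unfolding S_def by blast
    have "f mod g = (u' - (f div g) * u) * p + (v' - (f div g) * v) * q"
      unfolding f uv by (simp add: algebra_simps flip: minus_div_mult_eq_mod)
    then have "f mod g \<in> S" unfolding S_def by blast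
    with minimal have "f mod g = 0" using degree_mod_less[OF g(2), of f] by fastforce
    then show ?thesis by (simp add: mod_0_imp_dvd)
  qed
  then show ?thesis using that[OF uv g(2)] \<open>p \<in> S\<close> \<open>q \<in> S\<close> by blast
qed

lemma comaximal_monic_representative:
  fixes p q :: "'a::field poly"
  assumes q: "q \<noteq> 0"
  obtains a b where "comaximal a b" "lead_coeff b = 1" "a * q = p * b"
proof -
  obtain g u v where g: "g = u * p + v * q" "g \<noteq> 0" "g dvd p" "g dvd q"
    using poly_ideal_generator[OF q] .
  obtain a' b' where a': "p = g * a'" and b': "q = g * b'" using g(3,4) by blast
  have "g * (u * a' + v * b') = g * 1" using g(1) a' b' by (simp add: algebra_simps)
  then have uv: "u * a' + v * b' = 1" using g(2) by simp
  define c where "c = lead_coeff b'"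
  have "c \<noteq> 0" using b' q unfolding c_def by auto
  have "smult c u * smult (inverse c) a' + smult c v * smult (inverse c) b' = 1"
    using uv \<open>c \<noteq> 0\<close> by simp
  then have "comaximal (smult (inverse c) a') (smult (inverse c) b')"
    unfolding comaximal_def by blast
  moreover have "lead_coeff (smult (inverse c) b') = 1" using \<open>c \<noteq> 0\<close> unfolding c_def by simp
  moreover have "smult (inverse c) a' * q = p * smult (inverse c) b'"
    using a' b' by (simp add: algebra_simps)
  ultimately show ?thesis by (rule that)
qed

lemma field_hom_const_rf: "field_hom (const_rf :: 'a::field \<Rightarrow> 'a poly fract)"
  by unfold_locales (simp_all add: const_rf_def One_fract_def mult.commute flip: one_pCons)

interpretation const_rf: field_hom "const_rf :: 'a::field \<Rightarrow> 'a poly fract"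
  by (rule field_hom_const_rf)

lemma const_rf_add_var_rf: "const_rf c + var_rf = Fract [:c, 1:] 1"
  by (simp add: const_rf_def var_rf_def)

lemma poly_map_const_rf_Fract: "poly (map_poly const_rf p) (Fract r 1) = Fract (pcompose p r) 1"
  by (induction p) (simp_all add: map_poly_pCons pcompose_pCons const_rf_def Zero_fract_def)

lemma ring_hom_shift_poly: "ring_hom (shift_poly :: 'a::field poly \<Rightarrow> 'a poly fract poly)"
proof -
  interpret C: ring_hom "map_poly (const_rf :: 'a \<Rightarrow> 'a poly fract)"
    by (rule const_rf.ring_hom_map_poly)
  show ?thesis
    by unfold_locales (simp_all add: shift_poly_def pcompose_add pcompose_mult pcompose_1)
qed

interpretation shift_poly: ring_hom "shift_poly :: 'a::field poly \<Rightarrow> 'a poly fract poly"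
  by (rule ring_hom_shift_poly)

lemma shift_poly_eq_0_iff [simp]: "shift_poly p = 0 \<longleftrightarrow> p = 0"
  by (simp add: shift_poly_def pcompose_eq_0_iff)

lemma lead_coeff_shift_poly [simp]: "lead_coeff (shift_poly p) = const_rf (lead_coeff p)"
  using lead_coeff_comp[of "[:var_rf, 1:]" "map_poly const_rf p"]
  by (simp add: shift_poly_def degree_pcompose coeff_map_poly)

lemma coeff_pcompose_linear_below_degree:
  fixes p :: "'a::idom poly"
  assumes p: "degree p = Suc m"
  shows "coeff (pcompose p [:c, 1:]) m = coeff p m + of_nat (Suc m) * c * coeff p (Suc m)"
proof -
  define a where "a = coeff p (Suc m)"
  define r where "r = p - monom a (Suc m)"
  have "degree r \<le> m"
  proof (rule degree_le, intro allI impI)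
    fix i assume "m < i"
    then show "coeff r i = 0"
      using p unfolding r_def a_def by (cases "i = Suc m") (auto simp: coeff_monom coeff_eq_0)
  qed
  then have r: "coeff (pcompose r [:c, 1:]) m = coeff r m"
    using lead_coeff_comp[of "[:c, 1:]" r]
    by (cases "degree r = m") (simp_all add: degree_pcompose coeff_eq_0)
  have "pcompose (monom a (Suc m)) [:c, 1:] = smult a ([:c, 1:] ^ Suc m)"
    by (simp add: pcompose_altdef map_poly_monom poly_monom)
  moreover have "coeff ([:c, 1:] ^ Suc m) m = of_nat (Suc m) * c"
    using coeff_linear_poly_power[of m "Suc m" c 1] by simp
  moreover have "p = monom a (Suc m) + r" by (simp add: r_def)
  ultimately have "coeff (pcompose p [:c, 1:]) m = a * (of_nat (Suc m) * c) + coeff r m"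
    by (simp only: pcompose_add coeff_add coeff_smult r)
  also have "\<dots> = coeff p m + of_nat (Suc m) * c * a"
    by (simp add: coeff_monom r_def)
  finally show ?thesis unfolding a_def .
qed

lemma coeff_shift_poly_below_degree:
  assumes "degree p = Suc m"
  shows "coeff (shift_poly p) m
    = const_rf (coeff p m) + of_nat (Suc m) * var_rf * const_rf (coeff p (Suc m))"
  using coeff_pcompose_linear_below_degree[of "map_poly const_rf p" m var_rf] assms
  by (simp add: shift_poly_def coeff_map_poly)

definition equivariant :: "('a::field \<Rightarrow> 'a poly fract) \<Rightarrow> 'a poly \<Rightarrow> bool" where
  "equivariant \<alpha> P \<longleftrightarrow> map_poly \<alpha> P = shift_poly P"

lemma ring_hom_cross_eq:
  fixes h1 h2 :: "'a::comm_ring_1 \<Rightarrow> 'b::idom"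
  assumes "ring_hom h1" "ring_hom h2"
    and "h1 u = h2 u" "h1 v = h2 v" "h1 v \<noteq> 0" "p * v = u * q"
  shows "h1 p * h2 q = h2 p * h1 q"
proof -
  interpret h1: ring_hom h1 by (fact assms(1))
  interpret h2: ring_hom h2 by (fact assms(2))
  have "h1 p * h1 v = h1 u * h1 q" "h2 p * h2 v = h2 u * h2 q"
    using arg_cong[OF assms(6), of h1] arg_cong[OF assms(6), of h2] by simp_all
  then have "(h1 p * h2 q) * h1 v = (h2 p * h1 q) * h1 v"
    using assms(3,4) by (metis mult.commute mult.left_commute)
  then show ?thesis using assms(5) by simp
qed

lemma cocycle_if_equivariant_representative:
  fixes \<alpha> :: "'a::field \<Rightarrow> 'a poly fract"
  assumes "field_hom \<alpha>"
    and "\<alpha> f = Fract a b" "b \<noteq> 0" "equivariant \<alpha> a" "equivariant \<alpha> b"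
    and "\<alpha> f = Fract p q" "q \<noteq> 0"
  shows "Fract (map_poly \<alpha> p) (map_poly \<alpha> q) = Fract (shift_poly p) (shift_poly q)"
proof -
  interpret \<alpha>: field_hom \<alpha> by (fact assms(1))
  have "p * b = a * q" using assms(2,3,6,7) by (simp add: eq_fract)
  then have "map_poly \<alpha> p * shift_poly q = shift_poly p * map_poly \<alpha> q"
    using ring_hom_cross_eq[OF \<alpha>.ring_hom_map_poly ring_hom_shift_poly, of a b p q] assms(3-5)
    unfolding equivariant_def by simp
  then show ?thesis using assms(7) by (simp add: eq_fract)
qed

section \<open>From a ruling to an action\<close>

text \<open>On \<open>L(x)\<close> with \<open>x\<close> transcendental over \<open>L\<close>, the action sends \<open>A(x) / B(x)\<close>
  to \<open>A(x + t) / B(x + t)\<close>; here \<open>pcompose A [:x, 1:]\<close> is \<open>A(x + t)\<close> as a polynomial in \<open>t\<close>.\<close>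
definition translation :: "'a::field set \<Rightarrow> 'a \<Rightarrow> 'a \<Rightarrow> 'a poly fract" where
  "translation L x f = (SOME r. \<exists>A B. poly_over L A \<and> poly_over L B \<and> B \<noteq> 0 \<and>
     f = poly A x / poly B x \<and> r = Fract (pcompose A [:x, 1:]) (pcompose B [:x, 1:]))"

context
  fixes L :: "'a::field set" and x :: 'a
  assumes subfield_L: "subfield L"
    and transcendental: "\<not> algebraic_over L x"
    and generates: "gen_field (L \<union> {x}) = UNIV"
begin

lemma rational_representation:
  obtains A B where "poly_over L A" "poly_over L B" "B \<noteq> 0" "f = poly A x / poly B x"
proof -
  obtain A B where "poly_over L A" "poly_over L B" "poly B x \<noteq> 0" "f = poly A x / poly B x"
    using gen_field_adjoinE[OF subfield_L, of f x] generates by blast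
  moreover have "B \<noteq> 0" using \<open>poly B x \<noteq> 0\<close> by auto
  ultimately show ?thesis using that by blast
qed

lemma pcompose_translate_eq_0_iff [simp]: "pcompose A [:x, 1:] = 0 \<longleftrightarrow> A = 0"
  by (simp add: pcompose_eq_0_iff)

lemma translation_eq:
  assumes "poly_over L A" "poly_over L B" "B \<noteq> 0" "f = poly A x / poly B x"
  shows "translation L x f = Fract (pcompose A [:x, 1:]) (pcompose B [:x, 1:])"
proof -
  have "\<exists>r. \<exists>A B. poly_over L A \<and> poly_over L B \<and> B \<noteq> 0 \<and>
      f = poly A x / poly B x \<and> r = Fract (pcompose A [:x, 1:]) (pcompose B [:x, 1:])"
    using assms by blast
  from someI_ex[OF this] obtain A' B' where A'B': "poly_over L A'" "poly_over L B'" "B' \<noteq> 0"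
      "f = poly A' x / poly B' x"
      "translation L x f = Fract (pcompose A' [:x, 1:]) (pcompose B' [:x, 1:])"
    unfolding translation_def by blast
  have "poly B x \<noteq> 0" "poly B' x \<noteq> 0"
    using transcendental_poly_eq_0[OF transcendental] assms(2,3) A'B'(2,3) by blast+
  then have "poly (A * B' - A' * B) x = 0"
    using assms(4) A'B'(4) by (simp add: field_simps)
  moreover have "poly_over L (A * B' - A' * B)"
    using assms(1,2) A'B'(1,2) by (simp add: poly_over_diff poly_over_mult subfield_L)
  ultimately have "A * B' - A' * B = 0"
    using transcendental_poly_eq_0[OF transcendental] by blast
  then have "pcompose A [:x, 1:] * pcompose B' [:x, 1:]
      = pcompose A' [:x, 1:] * pcompose B [:x, 1:]"
    by (simp flip: pcompose_mult)
  then show ?thesis using A'B'(3,5) assms(3) by (simp add: eq_fract)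
qed

lemma field_hom_translation: "field_hom (translation L x)"
proof
  show "translation L x 1 = 1"
    using translation_eq[of 1 1 1] by (simp add: poly_over_1 subfield_L pcompose_1 One_fract_def)
next
  fix f g
  obtain A B where f: "poly_over L A" "poly_over L B" "B \<noteq> 0" "f = poly A x / poly B x"
    by (rule rational_representation)
  obtain C D where g: "poly_over L C" "poly_over L D" "D \<noteq> 0" "g = poly C x / poly D x"
    by (rule rational_representation)
  have "poly B x \<noteq> 0" "poly D x \<noteq> 0"
    using transcendental_poly_eq_0[OF transcendental] f(2,3) g(2,3) by blast+
  then have "f + g = poly (A * D + C * B) x / poly (B * D) x"
      "f * g = poly (A * C) x / poly (B * D) x"
    using f(4) g(4) by (simp_all add: add_frac_eq)
  then have "translation L x (f + g)
        = Fract (pcompose (A * D + C * B) [:x, 1:]) (pcompose (B * D) [:x, 1:])"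
      "translation L x (f * g) = Fract (pcompose (A * C) [:x, 1:]) (pcompose (B * D) [:x, 1:])"
    using f g by (simp_all add: translation_eq poly_over_add poly_over_mult subfield_L)
  then show "translation L x (f + g) = translation L x f + translation L x g"
      "translation L x (f * g) = translation L x f * translation L x g"
    using translation_eq[OF f] translation_eq[OF g] f(3) g(3)
    by (simp_all add: pcompose_add pcompose_mult)
qed

interpretation translation: field_hom "translation L x"
  by (rule field_hom_translation)

lemma translation_const: "c \<in> L \<Longrightarrow> translation L x c = const_rf c"
  using translation_eq[of "[:c:]" 1 c]
  by (simp add: poly_over_const poly_over_1 subfield_L pcompose_1 const_rf_def)

lemma translation_generator: "translation L x x = Fract [:x, 1:] 1"
  using translation_eq[of "[:0, 1:]" 1 x]
  by (simp add: poly_over_X poly_over_1 subfield_L pcompose_1 pcompose_pCons)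

lemma equivariant_translation_pcompose:
  assumes "poly_over L P"
  shows "equivariant (translation L x) (pcompose P [:x, 1:])"
proof -
  have "map_poly (translation L x) P = map_poly const_rf P"
    using assms translation_const unfolding poly_over_def
    by (intro poly_eqI) (simp add: coeff_map_poly)
  then have "map_poly (translation L x) (pcompose P [:x, 1:])
      = pcompose (map_poly const_rf P) [:Fract [:x, 1:] 1, 1:]"
    by (simp add: translation.map_poly_pcompose map_poly_pCons translation_generator)
  also have "\<dots> = shift_poly (pcompose P [:x, 1:])"
    by (simp add: shift_poly_def const_rf.map_poly_pcompose map_poly_pCons pcompose_pCons
        const_rf_add_var_rf flip: pcompose_assoc)
  finally show ?thesis unfolding equivariant_def .
qed

lemma rational_Ga_action_translation:
  assumes "k \<subseteq> L"
  shows "rational_Ga_action k (translation L x)"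
  unfolding rational_Ga_action_def
proof (intro conjI allI ballI impI)
  show "translation L x c = const_rf c" if "c \<in> k" for c
    using assms that translation_const by blast
next
  fix f
  obtain A B where f: "poly_over L A" "poly_over L B" "B \<noteq> 0" "f = poly A x / poly B x"
    by (rule rational_representation)
  have "poly B x \<noteq> 0" using transcendental_poly_eq_0[OF transcendental] f(2,3) by blast
  then have "poly (pcompose B [:x, 1:]) 0 \<noteq> 0"
      "poly (pcompose A [:x, 1:]) 0 / poly (pcompose B [:x, 1:]) 0 = f"
    using f(4) by (simp_all add: poly_pcompose)
  then show "\<exists>p q. poly q 0 \<noteq> 0 \<and> translation L x f = Fract p q \<and> poly p 0 / poly q 0 = f"
    using translation_eq[OF f] by blast
  fix p q
  assume "q \<noteq> 0" "translation L x f = Fract p q"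
  moreover have "pcompose B [:x, 1:] \<noteq> 0" using f(3) by simp
  ultimately show "Fract (map_poly (translation L x) p) (map_poly (translation L x) q)
      = Fract (shift_poly p) (shift_poly q)"
    using cocycle_if_equivariant_representative[OF field_hom_translation translation_eq[OF f]]
      equivariant_translation_pcompose[OF f(1)] equivariant_translation_pcompose[OF f(2)] by blast
qed simp_all

lemma translation_nontrivial: "\<not> trivial_action (translation L x)"
  unfolding trivial_action_def const_rf_def using translation_generator
  by (auto simp: eq_fract intro!: exI[of _ x])

end

lemma nontrivial_action_if_birationally_ruled:
  assumes "birationally_ruled k"
  shows "\<exists>\<alpha>. rational_Ga_action k \<alpha> \<and> \<not> trivial_action \<alpha>"
proof -
  obtain L x where "function_field_of_variety k L" "\<not> algebraic_over L x"
    "gen_field (L \<union> {x}) = UNIV"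
    using assms unfolding birationally_ruled_def by blast
  moreover from this(1) have "subfield L" "k \<subseteq> L"
    unfolding function_field_of_variety_def by blast+
  ultimately show ?thesis using rational_Ga_action_translation translation_nontrivial by blast
qed

section \<open>From an action to a ruling\<close>

lemma field_hom_if_rational_Ga_action: "rational_Ga_action k \<alpha> \<Longrightarrow> field_hom \<alpha>"
  unfolding rational_Ga_action_def by unfold_locales auto

definition invariants :: "('a::field \<Rightarrow> 'a poly fract) \<Rightarrow> 'a set" where
  "invariants \<alpha> = {f. \<alpha> f = const_rf f}"

context
  fixes k :: "'a::field set" and \<alpha> :: "'a \<Rightarrow> 'a poly fract"
  assumes action: "rational_Ga_action k \<alpha>"
begin

interpretation \<alpha>: field_hom \<alpha>
  by (rule field_hom_if_rational_Ga_action[OF action])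

text \<open>Reduced fractions are unique, so the cocycle identity applied to a reduced representation
  \<open>\<alpha> f = a / b\<close> makes both \<open>a\<close> and \<open>b\<close> equivariant.\<close>
lemma equivariant_representative:
  obtains a b where "b \<noteq> 0" "poly b 0 \<noteq> 0" "f = poly a 0 / poly b 0" "\<alpha> f = Fract a b"
    "equivariant \<alpha> a" "equivariant \<alpha> b"
proof -
  obtain p q where pq: "poly q 0 \<noteq> 0" "\<alpha> f = Fract p q" "poly p 0 / poly q 0 = f"
    using action unfolding rational_Ga_action_def by blast
  then have "q \<noteq> 0" by auto
  obtain a b where ab: "comaximal a b" "lead_coeff b = 1" "a * q = p * b"
    by (rule comaximal_monic_representative[OF \<open>q \<noteq> 0\<close>])
  then have "b \<noteq> 0" by auto
  have fab: "\<alpha> f = Fract a b" using pq(2) ab(3) \<open>b \<noteq> 0\<close> \<open>q \<noteq> 0\<close> by (simp add: eq_fract)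
  have "b dvd q" using comaximal_dvd[OF ab(1,3)] .
  then have "poly b 0 \<noteq> 0" using pq(1) by (auto elim: dvdE)
  have "f = poly a 0 / poly b 0"
    using arg_cong[OF ab(3), of "\<lambda>r. poly r 0"] pq(1,3) \<open>poly b 0 \<noteq> 0\<close> by (simp add: field_simps)
  have "Fract (map_poly \<alpha> a) (map_poly \<alpha> b) = Fract (shift_poly a) (shift_poly b)"
    using action fab \<open>b \<noteq> 0\<close> unfolding rational_Ga_action_def by blast
  then have "map_poly \<alpha> a * shift_poly b = shift_poly a * map_poly \<alpha> b"
    using \<open>b \<noteq> 0\<close> by (simp add: eq_fract)
  then have "equivariant \<alpha> a" "equivariant \<alpha> b"
    unfolding equivariant_def
    using comaximal_monic_unique[OF ring_hom.comaximal_hom[OF \<alpha>.ring_hom_map_poly ab(1)]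
        shift_poly.comaximal_hom[OF ab(1)]] ab(2) by (simp_all add: coeff_map_poly)
  with \<open>b \<noteq> 0\<close> \<open>poly b 0 \<noteq> 0\<close> \<open>f = poly a 0 / poly b 0\<close> fab show ?thesis by (rule that)
qed

lemma subfield_invariants: "subfield (invariants \<alpha>)"
  unfolding invariants_def by (rule \<alpha>.subfield_equalizer[OF field_hom_const_rf])

lemma base_subset_invariants: "k \<subseteq> invariants \<alpha>"
  using action unfolding rational_Ga_action_def invariants_def by blast

lemma poly_over_invariants_iff: "poly_over (invariants \<alpha>) p \<longleftrightarrow> map_poly \<alpha> p = map_poly const_rf p"
  unfolding poly_over_def invariants_def by (auto simp: poly_eq_iff coeff_map_poly)

context
  fixes s assumes slice: "\<alpha> s = const_rf s + var_rf"
begin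

lemma slice_transcendental: "\<not> algebraic_over (invariants \<alpha>) s"
proof -
  have "p = 0" if "poly_over (invariants \<alpha>) p" "poly p s = 0" for p
  proof -
    have "0 = \<alpha> (poly p s)" using that(2) by simp
    also have "\<dots> = poly (map_poly const_rf p) (Fract [:s, 1:] 1)"
      using that(1) slice by (simp add: \<alpha>.hom_poly poly_over_invariants_iff const_rf_add_var_rf)
    also have "\<dots> = Fract (pcompose p [:s, 1:]) 1" by (rule poly_map_const_rf_Fract)
    finally have "pcompose p [:s, 1:] = 0" by (simp add: Zero_fract_def eq_fract)
    then show "p = 0" by (simp add: pcompose_eq_0_iff)
  qed
  then show ?thesis unfolding algebraic_over_def poly_over_def by blast
qed

lemma poly_over_invariants_pcompose:
  assumes "equivariant \<alpha> P"
  shows "poly_over (invariants \<alpha>) (pcompose P [:- s, 1:])"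
proof -
  have "map_poly \<alpha> (pcompose P [:- s, 1:])
      = pcompose (map_poly const_rf P) (pcompose [:var_rf, 1:] [:- const_rf s - var_rf, 1:])"
    using assms unfolding equivariant_def
    by (simp add: \<alpha>.map_poly_pcompose shift_poly_def map_poly_pCons slice pcompose_assoc)
  also have "pcompose [:var_rf, 1:] [:- const_rf s - var_rf, 1:] = map_poly const_rf [:- s, 1:]"
    by (simp add: pcompose_pCons map_poly_pCons)
  finally show ?thesis
    by (simp add: poly_over_invariants_iff const_rf.map_poly_pcompose)
qed

lemma slice_generates: "gen_field (invariants \<alpha> \<union> {s}) = UNIV"
proof -
  have "f \<in> gen_field (invariants \<alpha> \<union> {s})" for f
  proof -
    obtain a b where "f = poly a 0 / poly b 0" "equivariant \<alpha> a" "equivariant \<alpha> b"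
      by (rule equivariant_representative)
    moreover have "poly P 0 = poly (pcompose P [:- s, 1:]) s" for P by (simp add: poly_pcompose)
    ultimately show ?thesis
      using gen_field_adjoinI[OF subfield_invariants] poly_over_invariants_pcompose by metis
  qed
  then show ?thesis by blast
qed

end

end

text \<open>The slice comes from comparing the coefficients of degree \<open>m\<close> and \<open>m + 1\<close> of
  \<open>A(X)\<close> and \<open>A(X + t)\<close>; dividing by \<open>m + 1\<close> needs characteristic zero.\<close>
lemma slice_from_equivariant:
  fixes \<alpha> :: "'a::field_char_0 \<Rightarrow> 'a poly fract"
  assumes "field_hom \<alpha>" "degree A = Suc m" "equivariant \<alpha> A"
  defines "s \<equiv> coeff A m / (of_nat (Suc m) * coeff A (Suc m))"
  shows "\<alpha> s = const_rf s + var_rf"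
proof -
  interpret \<alpha>: field_hom \<alpha> by fact
  have A: "map_poly \<alpha> A = shift_poly A" using assms(3) unfolding equivariant_def .
  define c l where "c = coeff A m" and "l = coeff A (Suc m)"
  have "l \<noteq> 0"
    using assms(2) unfolding l_def by (metis leading_coeff_0_iff nat.distinct(1) degree_0)
  have "\<alpha> l = const_rf l"
    using arg_cong[OF A, of lead_coeff] assms(2) by (simp add: l_def coeff_map_poly)
  moreover have "\<alpha> c = const_rf c + of_nat (Suc m) * var_rf * const_rf l"
    using arg_cong[OF A, of "\<lambda>p. coeff p m"] coeff_shift_poly_below_degree[OF assms(2)]
    by (simp add: coeff_map_poly c_def l_def)
  moreover have "(of_nat (Suc m) :: 'a poly fract) * const_rf l \<noteq> 0"
    using \<open>l \<noteq> 0\<close> const_rf.hom_of_nat[of "Suc m"]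
    by (metis const_rf.hom_eq_0_iff mult_eq_0_iff of_nat_eq_0_iff nat.distinct(1))
  ultimately show ?thesis
    unfolding s_def c_def[symmetric] l_def[symmetric] by (simp add: field_simps)
qed

lemma slice_exists:
  fixes \<alpha> :: "'a::field_char_0 \<Rightarrow> 'a poly fract"
  assumes action: "rational_Ga_action k \<alpha>" and "\<not> trivial_action \<alpha>"
  obtains s where "\<alpha> s = const_rf s + var_rf"
proof -
  interpret \<alpha>: field_hom \<alpha> by (rule field_hom_if_rational_Ga_action[OF action])
  obtain f where f: "\<alpha> f \<noteq> const_rf f" using assms(2) unfolding trivial_action_def by blast
  obtain a b where ab: "b \<noteq> 0" "poly b 0 \<noteq> 0" "f = poly a 0 / poly b 0" "\<alpha> f = Fract a b"
      "equivariant \<alpha> a" "equivariant \<alpha> b"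
    by (rule equivariant_representative[OF action])
  have "degree a \<noteq> 0 \<or> degree b \<noteq> 0"
  proof (rule ccontr)
    assume "\<not> (degree a \<noteq> 0 \<or> degree b \<noteq> 0)"
    then have "a = [:poly a 0:]" "b = [:poly b 0:]" by (simp_all add: degree_0_id poly_0_coeff_0)
    then have "\<alpha> f = Fract [:poly a 0:] [:poly b 0:]" using ab(4) by simp
    also have "\<dots> = const_rf f" using ab(2,3) by (simp add: const_rf_def eq_fract)
    finally show False using f by contradiction
  qed
  then obtain A m where "degree A = Suc m" "equivariant \<alpha> A"
    using ab(5,6) not0_implies_Suc by blast
  then show ?thesis
    using slice_from_equivariant[OF \<alpha>.field_hom_axioms] that by blast
qed

lemma birationally_ruled_if_nontrivial_action:
  fixes k :: "'a::field_char_0 set"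
  assumes V: "function_field_of_variety k UNIV"
    and action: "rational_Ga_action k \<alpha>" and "\<not> trivial_action \<alpha>"
  shows "birationally_ruled k"
proof -
  obtain s where slice: "\<alpha> s = const_rf s + var_rf"
    using slice_exists[OF action \<open>\<not> trivial_action \<alpha>\<close>] .
  note transcendental = slice_transcendental[OF action slice]
    and generates = slice_generates[OF action slice]
    and invariants = subfield_invariants[OF action] base_subset_invariants[OF action]
  have "fin_gen_over k (invariants \<alpha>)"
    using fin_gen_over_if_adjoin_transcendental[OF invariants(2,1) _ transcendental generates] V
    unfolding function_field_of_variety_def by blast
  moreover have "alg_closed_in k (invariants \<alpha>)"
    using V unfolding function_field_of_variety_def alg_closed_in_def by blast
  ultimately have "function_field_of_variety k (invariants \<alpha>)"
    using V invariants unfolding function_field_of_variety_def by blast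
  then show ?thesis
    unfolding birationally_ruled_def using transcendental generates by blast
qed

theorem proposition1p1:
  fixes k :: "'a::field_char_0 set"
  assumes "function_field_of_variety k (UNIV :: 'a set)"
  shows "(\<exists>\<alpha>. rational_Ga_action k \<alpha> \<and> \<not> trivial_action \<alpha>) \<longleftrightarrow> birationally_ruled k"
  using birationally_ruled_if_nontrivial_action[OF assms] nontrivial_action_if_birationally_ruled
  by blast

end
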